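(* Let $\kappa$ be a cumulant function with effective domain $\Theta$ satisfying Assumption (A1), let $v>0$, $\varphi>0$, $\theta\in\mathring\Theta$, $Y\sim\mathrm{EDF}(\theta,v,\varphi,\kappa)$ and $\delta\in(0,1)$. Define the random variables $$l^{\delta}(Y,v,\varphi,\kappa)=\inf\{\mu\in\kappa'(\mathring\Theta)\,:\,F^*(Y;h(\mu),v,\varphi,\kappa)\le 1-\delta\},$$ $$u^{\delta}(Y,v,\varphi,\kappa)=\sup\{\mu\in\kappa'(\mathring\Theta)\,:\,F(Y;h(\mu),v,\varphi,\kappa)\ge \delta\}.$$ Then $\mathbb P(\mathbb E[Y]\ge l^{\delta}(Y,v,\varphi,\kappa))\ge 1-\delta$ and $\mathbb P(\mathbb E[Y]\le u^{\delta}(Y,v,\varphi,\kappa))\ge 1-\delta$.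
   Context: A real random variable $Y$ follows $\mathrm{EDF}(\theta,v,\varphi,\kappa)$ if it has density $f(y)=\exp\{(y\theta-\kappa(\theta))/(\varphi/v)+a(y;v/\varphi)\}$ with respect to a $\sigma$-finite measure $\nu$ on $\mathbb R$ not depending on $\theta$; $\theta\in\Theta$ is the canonical parameter, $\Theta$ the effective domain, $\kappa$ the cumulant function, $v>0$ the volume, $\varphi>0$ the dispersion parameter, $a$ a normalizing function. Assumption (A1): $\Theta$ has non-empty interior $\mathring{\Theta}$ and $\nu$ is not a single point mass. Then $\kappa$ is strictly convex and smooth on $\mathring\Theta$, $\mathbb E[Y]=\kappa'(\theta)$, $\kappa'(\mathring\Theta)$ is the mean parameter space and $h=(\kappa')^{-1}$ the canonical link. For $\mu\in\kappa'(\mathring\Theta)$ and $y\in\mathbb R$, $F(y;h(\mu),v,\varphi,\kappa)=\mathbb P(W\le y)$ and $F^*(y;h(\mu),v,\varphi,\kappa)=\mathbb P(W<y)$ where $W\sim\mathrm{EDF}(h(\mu),v,\varphi,\kappa)$. *)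

theory Defs
  imports "HOL-Probability.Probability"
begin

definition edf_density ::
  "(real \<Rightarrow> real) \<Rightarrow> (real \<Rightarrow> real \<Rightarrow> real) \<Rightarrow> real \<Rightarrow> real \<Rightarrow> real \<Rightarrow> real \<Rightarrow> real" where
  "edf_density \<kappa> a v \<phi> \<theta> y = exp ((y * \<theta> - \<kappa> \<theta>) / (\<phi> / v) + a y (v / \<phi>))"

definition edf_measure ::
  "real measure \<Rightarrow> (real \<Rightarrow> real) \<Rightarrow> (real \<Rightarrow> real \<Rightarrow> real) \<Rightarrow> real \<Rightarrow> real \<Rightarrow> real \<Rightarrow> real measure" where
  "edf_measure \<nu> \<kappa> a v \<phi> \<theta> = density \<nu> (\<lambda>y. ennreal (edf_density \<kappa> a v \<phi> \<theta> y))"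

definition canon_link :: "(real \<Rightarrow> real) \<Rightarrow> real set \<Rightarrow> real \<Rightarrow> real" where
  "canon_link \<kappa> \<Theta> \<mu> = the_inv_into (interior \<Theta>) (deriv \<kappa>) \<mu>"

text \<open>F(y; h(mu), v, phi, kappa) = P(W <= y) and F*(y; ...) = P(W < y).\<close>
definition edf_cdf ::
  "real measure \<Rightarrow> (real \<Rightarrow> real) \<Rightarrow> real set \<Rightarrow> (real \<Rightarrow> real \<Rightarrow> real) \<Rightarrow> real \<Rightarrow> real \<Rightarrow> real \<Rightarrow> real \<Rightarrow> real" where
  "edf_cdf \<nu> \<kappa> \<Theta> a v \<phi> \<mu> y = measure (edf_measure \<nu> \<kappa> a v \<phi> (canon_link \<kappa> \<Theta> \<mu>)) {..y}"

definition edf_cdf_strict ::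
  "real measure \<Rightarrow> (real \<Rightarrow> real) \<Rightarrow> real set \<Rightarrow> (real \<Rightarrow> real \<Rightarrow> real) \<Rightarrow> real \<Rightarrow> real \<Rightarrow> real \<Rightarrow> real \<Rightarrow> real" where
  "edf_cdf_strict \<nu> \<kappa> \<Theta> a v \<phi> \<mu> y = measure (edf_measure \<nu> \<kappa> a v \<phi> (canon_link \<kappa> \<Theta> \<mu>)) {..<y}"

text \<open>Lower and upper bounds, as extended reals (inf of the empty set is +infinity,
  sup of the empty set is -infinity, unbounded sets give -/+ infinity).\<close>
definition lower_bd ::
  "real measure \<Rightarrow> (real \<Rightarrow> real) \<Rightarrow> real set \<Rightarrow> (real \<Rightarrow> real \<Rightarrow> real) \<Rightarrow> real \<Rightarrow> real \<Rightarrow> real \<Rightarrow> real \<Rightarrow> ereal" where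
  "lower_bd \<nu> \<kappa> \<Theta> a v \<phi> \<delta> y =
     Inf (ereal ` {\<mu> \<in> deriv \<kappa> ` interior \<Theta>. edf_cdf_strict \<nu> \<kappa> \<Theta> a v \<phi> \<mu> y \<le> 1 - \<delta>})"

definition upper_bd ::
  "real measure \<Rightarrow> (real \<Rightarrow> real) \<Rightarrow> real set \<Rightarrow> (real \<Rightarrow> real \<Rightarrow> real) \<Rightarrow> real \<Rightarrow> real \<Rightarrow> real \<Rightarrow> real \<Rightarrow> ereal" where
  "upper_bd \<nu> \<kappa> \<Theta> a v \<phi> \<delta> y =
     Sup (ereal ` {\<mu> \<in> deriv \<kappa> ` interior \<Theta>. edf_cdf \<nu> \<kappa> \<Theta> a v \<phi> \<mu> y \<ge> \<delta>})"

end

theory Submission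
  imports Defs
begin

text \<open>
  With \<open>\<rho> = v / \<phi>\<close>, normalisation of the density gives
  \<open>\<kappa> \<theta> = ln (\<integral> exp (\<rho> \<theta> y + a y \<rho>) d\<nu>) / \<rho>\<close>, and differentiating under the
  integral sign shows that \<open>\<kappa>' \<theta>\<close> is the mean of \<open>EDF(\<theta>)\<close>. For \<open>\<theta> < \<theta>'\<close> the
  difference \<open>\<kappa>' \<theta>' - \<kappa>' \<theta>\<close> is the covariance under \<open>\<theta>\<close> of \<open>Y\<close> and the increasing
  likelihood ratio of \<open>\<theta>'\<close> to \<open>\<theta>\<close>, which is positive because \<open>\<nu>\<close> is not a point
  mass; so \<open>\<kappa>'\<close> is injective and \<open>h (\<kappa>' \<theta>) = \<theta>\<close>. Consequently \<open>\<mu> = E[Y]\<close> belongs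
  to the set defining \<open>l\<^sup>\<delta>(Y)\<close> as soon as \<open>F\<^sup>*(Y; \<theta>) \<le> 1 - \<delta>\<close>, where \<open>F\<^sup>*(\<cdot>; \<theta>)\<close>
  is the left-continuous distribution function of \<open>Y\<close> itself, and the probability
  integral transform inequality \<open>P(P(W \<ge> Y) < \<delta>) \<le> \<delta>\<close> (\<open>W\<close> an independent copy of
  \<open>Y\<close>) bounds the probability of the complement. The upper bound is symmetric, using
  \<open>P(F(Y) < \<delta>) \<le> \<delta>\<close>. The events are measurable because \<open>l\<^sup>\<delta>\<close> and \<open>u\<^sup>\<delta>\<close> are
  monotone in \<open>Y\<close>.
\<close>

section \<open>Differentiation under the integral sign\<close>

context
  fixes f :: "real \<Rightarrow> 'a \<Rightarrow> real" and f' w :: "'a \<Rightarrow> real" and M :: "'a measure" and t e :: real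
  assumes e: "0 < e"
    and f_int: "\<And>s. \<bar>s - t\<bar> \<le> e \<Longrightarrow> integrable M (f s)"
    and f'_meas: "f' \<in> borel_measurable M"
    and f_deriv: "\<And>x. x \<in> space M \<Longrightarrow> ((\<lambda>s. f s x) has_real_derivative f' x) (at t)"
    and w_int: "integrable M w"
    and bound: "\<And>h x. x \<in> space M \<Longrightarrow> h \<noteq> 0 \<Longrightarrow> \<bar>h\<bar> \<le> e \<Longrightarrow>
      \<bar>(f (t + h) x - f t x) / h\<bar> \<le> w x"
begin

lemma integrable_derivative_dominated: "integrable M f'"
proof (rule Bochner_Integration.integrable_bound[OF w_int f'_meas AE_I2])
  fix x assume x: "x \<in> space M"
  have "\<bar>f' x\<bar> \<le> w x"
  proof (rule tendsto_upperbound)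
    show "((\<lambda>h. \<bar>(f (t + h) x - f t x) / h\<bar>) \<longlongrightarrow> \<bar>f' x\<bar>) (at 0)"
      using f_deriv[OF x] unfolding DERIV_def by (rule tendsto_rabs)
    have "\<bar>(f (t + h) x - f t x) / h\<bar> \<le> w x" if "h \<noteq> 0" "dist h 0 < e" for h
      using that by (intro bound[OF x]) simp_all
    then show "\<forall>\<^sub>F h in at 0. \<bar>(f (t + h) x - f t x) / h\<bar> \<le> w x"
      unfolding eventually_at using e by blast
  qed simp
  then show "norm (f' x) \<le> norm (w x)"
    using abs_ge_self[of "w x"] by simp
qed

lemma tendsto_integral_difference_quotient:
  assumes h_ne: "\<And>n. h n \<noteq> 0" and h_le: "\<And>n. \<bar>h n\<bar> \<le> e" and h: "h \<longlonglongrightarrow> 0"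
  shows "(\<lambda>n. ((\<integral>x. f (t + h n) x \<partial>M) - (\<integral>x. f t x \<partial>M)) / h n) \<longlonglongrightarrow> (\<integral>x. f' x \<partial>M)"
proof -
  define q where "q n x = (f (t + h n) x - f t x) / h n" for n x
  have f_h_int: "integrable M (f (t + h n))" for n
    using h_le[of n] by (intro f_int) simp
  have lim: "(\<lambda>n. \<integral>x. q n x \<partial>M) \<longlonglongrightarrow> (\<integral>x. f' x \<partial>M)"
  proof (rule integral_dominated_convergence[OF f'_meas _ w_int])
    show "q n \<in> borel_measurable M" for n
      unfolding q_def using f_h_int[of n] f_int[of t] e by (intro borel_measurable_divide) auto
    show "AE x in M. (\<lambda>n. q n x) \<longlonglongrightarrow> f' x"
    proof (rule AE_I2)
      fix x assume "x \<in> space M"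
      then have "((\<lambda>s. (f (t + s) x - f t x) / s) \<longlongrightarrow> f' x) (at 0)"
        using f_deriv unfolding DERIV_def by blast
      moreover have "\<forall>n. h n \<in> UNIV - {0}"
        using h_ne by simp
      ultimately have "((\<lambda>s. (f (t + s) x - f t x) / s) \<circ> h) \<longlonglongrightarrow> f' x"
        using h by (simp add: tendsto_at_iff_sequentially)
      then show "(\<lambda>n. q n x) \<longlonglongrightarrow> f' x"
        unfolding q_def comp_def .
    qed
    show "AE x in M. norm (q n x) \<le> w x" for n
      unfolding q_def real_norm_def using h_ne h_le by (intro AE_I2 bound)
  qed
  have quotient_eq: "(\<integral>x. q n x \<partial>M) = ((\<integral>x. f (t + h n) x \<partial>M) - (\<integral>x. f t x \<partial>M)) / h n" for n
    unfolding q_def using f_h_int[of n] f_int[of t] e by simp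
  show ?thesis
    using lim unfolding quotient_eq .
qed

lemma has_real_derivative_integral:
  "((\<lambda>s. \<integral>x. f s x \<partial>M) has_real_derivative (\<integral>x. f' x \<partial>M)) (at t)"
  unfolding DERIV_def tendsto_at_iff_sequentially comp_def
proof (intro allI impI)
  fix X :: "nat \<Rightarrow> real"
  assume X_ne: "\<forall>n. X n \<in> UNIV - {0}" and X: "X \<longlonglongrightarrow> 0"
  obtain N where N: "\<And>n. N \<le> n \<Longrightarrow> \<bar>X n\<bar> < e"
    using X e unfolding LIMSEQ_iff by fastforce
  have "(\<lambda>n. ((\<integral>x. f (t + X (n + N)) x \<partial>M) - (\<integral>x. f t x \<partial>M)) / X (n + N)) \<longlonglongrightarrow> (\<integral>x. f' x \<partial>M)"
  proof (rule tendsto_integral_difference_quotient)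
    show "X (n + N) \<noteq> 0" and "\<bar>X (n + N)\<bar> \<le> e" for n
      using X_ne N[of "n + N"] by auto
    show "(\<lambda>n. X (n + N)) \<longlonglongrightarrow> 0"
      using X by (rule LIMSEQ_ignore_initial_segment)
  qed
  then show "(\<lambda>n. ((\<integral>x. f (t + X n) x \<partial>M) - (\<integral>x. f t x \<partial>M)) / X n) \<longlonglongrightarrow> (\<integral>x. f' x \<partial>M)"
    by (rule LIMSEQ_offset)
qed

end

lemma abs_exp_minus_one_le:
  fixes x :: real
  shows "\<bar>exp x - 1\<bar> \<le> \<bar>x\<bar> * exp \<bar>x\<bar>"
proof (cases "0 \<le> x")
  case True
  have "(1 - x) * exp x \<le> exp (- x) * exp x"
    using exp_ge_add_one_self[of "- x"] by (intro mult_right_mono) auto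
  then have "exp x - 1 \<le> x * exp x"
    by (simp add: exp_minus_inverse algebra_simps)
  then show ?thesis
    using True by simp
next
  case False
  then have "\<bar>exp x - 1\<bar> = 1 - exp x" "\<bar>x\<bar> = - x"
    by simp_all
  then have "\<bar>exp x - 1\<bar> \<le> \<bar>x\<bar>"
    using exp_ge_add_one_self[of x] by linarith
  also have "\<dots> \<le> \<bar>x\<bar> * exp \<bar>x\<bar>"
    using mult_left_mono[of 1 "exp \<bar>x\<bar>" "\<bar>x\<bar>"] by simp
  finally show ?thesis .
qed

lemma exp_abs_le: "exp \<bar>x :: real\<bar> \<le> exp x + exp (- x)"
  by (cases "0 \<le> x") (simp_all add: add_pos_nonneg add_nonneg_pos)

lemma abs_exp_diff_quotient_le:
  fixes c e h :: real
  assumes e: "0 < e" and h: "h \<noteq> 0" "2 * \<bar>h\<bar> \<le> e"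
  shows "\<bar>(exp (c * h) - 1) / h\<bar> \<le> 2 * (exp (c * e) + exp (- (c * e))) / e"
proof -
  have "\<bar>(exp (c * h) - 1) / h\<bar> \<le> \<bar>c * h\<bar> * exp \<bar>c * h\<bar> / \<bar>h\<bar>"
    unfolding abs_divide by (rule divide_right_mono[OF abs_exp_minus_one_le]) simp
  also have "\<dots> = \<bar>c\<bar> * exp (\<bar>c\<bar> * \<bar>h\<bar>)"
    using h by (simp add: abs_mult)
  also have "\<dots> \<le> \<bar>c\<bar> * exp (\<bar>c\<bar> * e / 2)"
    using mult_left_mono[OF h(2), of "\<bar>c\<bar>"] by (intro mult_left_mono) (simp_all add: algebra_simps)
  also have "\<dots> \<le> 2 / e * exp (\<bar>c\<bar> * e / 2) * exp (\<bar>c\<bar> * e / 2)"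
  proof -
    have "\<bar>c\<bar> * e / 2 \<le> exp (\<bar>c\<bar> * e / 2)"
      using exp_ge_add_one_self[of "\<bar>c\<bar> * e / 2"] by linarith
    then have "\<bar>c\<bar> \<le> 2 / e * exp (\<bar>c\<bar> * e / 2)"
      using e by (simp add: field_simps)
    then show ?thesis
      by (rule mult_right_mono) simp
  qed
  also have "\<dots> = 2 * exp \<bar>c * e\<bar> / e"
    using e by (simp add: mult.assoc exp_add[symmetric] abs_mult)
  also have "\<dots> \<le> 2 * (exp (c * e) + exp (- (c * e))) / e"
    using e exp_abs_le[of "c * e"] by (simp add: divide_right_mono)
  finally show ?thesis .
qed

section \<open>Down-sets of the real line and the probability integral transform\<close>

lemma downset_eq_UN_atMost:
  fixes A :: "real set"
  assumes down: "\<And>x y. y \<in> A \<Longrightarrow> x \<le> y \<Longrightarrow> x \<in> A" and "A \<noteq> {}"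
  obtains X where "incseq X" "\<And>n. X n \<in> A" "A = (\<Union>n. {..X n})"
proof (cases "bdd_above A")
  case False
  have "real n \<in> A" for n
    using False down unfolding bdd_above_def by (meson linorder_not_le less_imp_le)
  moreover have "x \<in> (\<Union>n. {..real n})" for x
    using real_arch_simple[of x] by auto
  ultimately show ?thesis
    by (intro that[of real]) (auto simp: incseq_def intro: down)
next
  case bdd: True
  have below_Sup: "x \<in> A" if "x < Sup A" for x
    using less_cSup_iff[OF \<open>A \<noteq> {}\<close> bdd] that down by (meson less_imp_le)
  have le_Sup: "x \<le> Sup A" if "x \<in> A" for x
    using that bdd by (rule cSup_upper)
  show ?thesis
  proof (cases "Sup A \<in> A")
    case True
    then show ?thesis
      by (intro that[of "\<lambda>_. Sup A"]) (auto simp: incseq_def intro: down le_Sup)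
  next
    case False
    have "x \<in> (\<Union>n. {..Sup A - 1 / real (Suc n)})" if "x \<in> A" for x
    proof -
      have "x < Sup A"
        using le_Sup[OF that] that False by (cases "x = Sup A") auto
      then obtain n where "inverse (real (Suc n)) < Sup A - x"
        using reals_Archimedean by (metis diff_gt_0_iff_gt)
      then have "x \<le> Sup A - 1 / real (Suc n)"
        by (simp add: inverse_eq_divide)
      then show ?thesis
        by blast
    qed
    moreover have "x \<in> A" if "x \<le> Sup A - 1 / real (Suc n)" for x n
    proof (rule below_Sup)
      have "0 < 1 / real (Suc n)"
        by simp
      then show "x < Sup A"
        using that by linarith
    qed
    ultimately show ?thesis
      by (intro that[of "\<lambda>n. Sup A - 1 / real (Suc n)"]) (auto simp: incseq_def frac_le)
  qed
qed

lemma upset_eq_UN_atLeast: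
  fixes A :: "real set"
  assumes up: "\<And>x y. y \<in> A \<Longrightarrow> y \<le> x \<Longrightarrow> x \<in> A" and "A \<noteq> {}"
  obtains X where "decseq X" "\<And>n. X n \<in> A" "A = (\<Union>n. {X n..})"
proof -
  have mem_uminus: "- x \<in> uminus ` A \<longleftrightarrow> x \<in> A" for x :: real
    by force
  have down: "x \<in> uminus ` A" if "y \<in> uminus ` A" "x \<le> y" for x y
  proof -
    have "- y \<in> A"
      using that(1) mem_uminus[of "- y"] by simp
    then have "- x \<in> A"
      using up that(2) by simp
    then show ?thesis
      using mem_uminus[of "- x"] by simp
  qed
  have nonempty: "uminus ` A \<noteq> {}"
    using \<open>A \<noteq> {}\<close> by simp
  obtain X where X: "incseq X" "\<And>n. X n \<in> uminus ` A" "uminus ` A = (\<Union>n. {..X n})"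
  proof (rule downset_eq_UN_atMost[OF down nonempty])
    fix X assume "incseq X" "\<And>n. X n \<in> uminus ` A" "uminus ` A = (\<Union>n. {..X n})"
    then show thesis
      by (rule that)
  qed
  have "x \<in> A \<longleftrightarrow> (\<exists>n. - X n \<le> x)" for x
    using X(3) mem_uminus[of x] by (auto simp: minus_le_iff)
  then have "A = (\<Union>n. {- X n..})"
    by auto
  moreover have "- X n \<in> A" for n
    using X(2)[of n] mem_uminus[of "- X n"] by simp
  ultimately show ?thesis
    using X(1) by (intro that[of "\<lambda>n. - X n"]) (auto simp: incseq_def decseq_def)
qed

lemma mono_vimage_atMost_borel:
  fixes f :: "real \<Rightarrow> 'b::order"
  assumes "mono f"
  shows "f -` {..c} \<in> sets borel"
  by (rule real_interval_borel_measurable)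
    (use assms in \<open>auto simp: is_interval_1 dest: monoD intro: order_trans\<close>)

lemma mono_vimage_atLeast_borel:
  fixes f :: "real \<Rightarrow> 'b::order"
  assumes "mono f"
  shows "f -` {c..} \<in> sets borel"
  by (rule real_interval_borel_measurable)
    (use assms in \<open>auto simp: is_interval_1 dest: monoD intro: order_trans\<close>)

lemma
  fixes P :: "real measure"
  assumes "finite_measure P" "sets P = sets borel"
  shows mono_measure_atMost: "mono (\<lambda>y. measure P {..y})"
    and mono_measure_lessThan: "mono (\<lambda>y. measure P {..<y})"
proof -
  have le: "measure P A \<le> measure P B" if "A \<subseteq> B" "B \<in> sets borel" for A B
    using finite_measure.finite_measure_mono[OF assms(1) that(1)] that(2) assms(2) by simp
  show "mono (\<lambda>y. measure P {..y})" and "mono (\<lambda>y. measure P {..<y})"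
    by (rule monoI, rule le, auto)+
qed

lemma (in finite_measure) measure_UN_incseq_le:
  assumes "range S \<subseteq> sets M" "incseq S" "\<And>n. measure M (S n) \<le> d"
  shows "measure M (\<Union>n. S n) \<le> d"
  by (rule LIMSEQ_le_const2[OF finite_Lim_measure_incseq[OF assms(1,2)]]) (use assms(3) in auto)

lemma measure_downset_le:
  fixes P :: "real measure"
  assumes "finite_measure P" and sets: "sets P = sets borel"
    and down: "\<And>x y. y \<in> A \<Longrightarrow> x \<le> y \<Longrightarrow> x \<in> A"
    and bound: "\<And>y. y \<in> A \<Longrightarrow> measure P {..y} \<le> d" and "0 \<le> d"
  shows "measure P A \<le> d"
proof (cases "A = {}")
  case False
  obtain X where X: "incseq X" "\<And>n. X n \<in> A" "A = (\<Union>n. {..X n})"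
  proof (rule downset_eq_UN_atMost[OF down False])
    fix X assume "incseq X" "\<And>n. X n \<in> A" "A = (\<Union>n. {..X n})"
    then show thesis
      by (rule that)
  qed
  have "measure P (\<Union>n. {..X n}) \<le> d"
  proof (rule finite_measure.measure_UN_incseq_le[OF assms(1), where S = "\<lambda>n. {..X n}"])
    show "range (\<lambda>n. {..X n}) \<subseteq> sets P" and "incseq (\<lambda>n. {..X n})"
      using X(1) by (auto simp: sets incseq_def)
    show "measure P {..X n} \<le> d" for n
      by (rule bound[OF X(2)])
  qed
  then show ?thesis
    using X(3) by simp
qed (simp add: \<open>0 \<le> d\<close>)

lemma measure_upset_le:
  fixes P :: "real measure"
  assumes "finite_measure P" and sets: "sets P = sets borel"
    and up: "\<And>x y. y \<in> A \<Longrightarrow> y \<le> x \<Longrightarrow> x \<in> A"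
    and bound: "\<And>y. y \<in> A \<Longrightarrow> measure P {y..} \<le> d" and "0 \<le> d"
  shows "measure P A \<le> d"
proof (cases "A = {}")
  case False
  obtain X where X: "decseq X" "\<And>n. X n \<in> A" "A = (\<Union>n. {X n..})"
  proof (rule upset_eq_UN_atLeast[OF up False])
    fix X assume "decseq X" "\<And>n. X n \<in> A" "A = (\<Union>n. {X n..})"
    then show thesis
      by (rule that)
  qed
  have "measure P (\<Union>n. {X n..}) \<le> d"
  proof (rule finite_measure.measure_UN_incseq_le[OF assms(1), where S = "\<lambda>n. {X n..}"])
    show "range (\<lambda>n. {X n..}) \<subseteq> sets P" and "incseq (\<lambda>n. {X n..})"
      using X(1) by (auto simp: sets incseq_def decseq_def)
    show "measure P {X n..} \<le> d" for n
      by (rule bound[OF X(2)])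
  qed
  then show ?thesis
    using X(3) by simp
qed (simp add: \<open>0 \<le> d\<close>)

lemma measure_cdf_less_le:
  fixes P :: "real measure"
  assumes P: "finite_measure P" and sets: "sets P = sets borel" and "0 \<le> d"
  shows "measure P {y. measure P {..y} < d} \<le> d"
proof (rule measure_downset_le[OF P sets])
  show "x \<in> {y. measure P {..y} < d}" if "y \<in> {y. measure P {..y} < d}" "x \<le> y" for x y
    using that finite_measure.finite_measure_mono[OF P, of "{..x}" "{..y}"] by (auto simp: sets)
qed (use assms(3) in auto)

lemma measure_ccdf_less_le:
  fixes P :: "real measure"
  assumes P: "finite_measure P" and sets: "sets P = sets borel" and "0 \<le> d"
  shows "measure P {y. measure P {y..} < d} \<le> d"
proof (rule measure_upset_le[OF P sets])
  show "x \<in> {y. measure P {y..} < d}" if "y \<in> {y. measure P {y..} < d}" "y \<le> x" for x y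
    using that finite_measure.finite_measure_mono[OF P, of "{x..}" "{y..}"] by (auto simp: sets)
qed (use assms(3) in auto)

section \<open>Confidence bounds from distribution functions\<close>

lemma (in prob_space) prob_ge_of_distr_complement_le:
  assumes Y: "random_variable borel Y" and C: "C \<in> sets borel" "C \<subseteq> A" and A: "A \<in> sets borel"
    and complement: "measure (distr M borel Y) (UNIV - C) \<le> \<delta>"
  shows "1 - \<delta> \<le> prob {\<omega> \<in> space M. Y \<omega> \<in> A}"
proof -
  interpret P: prob_space "distr M borel Y"
    using Y by (rule prob_space_distr)
  have "1 - \<delta> \<le> measure (distr M borel Y) C"
    using P.prob_compl[of C] C complement by simp
  also have "\<dots> \<le> measure (distr M borel Y) A"
    using C A by (intro P.finite_measure_mono) simp_all
  also have "\<dots> = prob (Y -` A \<inter> space M)"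
    by (rule measure_distr[OF Y A])
  also have "Y -` A \<inter> space M = {\<omega> \<in> space M. Y \<omega> \<in> A}"
    by auto
  finally show ?thesis .
qed

lemma (in prob_space) lower_confidence_bound:
  fixes Y :: "'a \<Rightarrow> real" and L :: "real \<Rightarrow> 'b::order"
  assumes Y: "random_variable borel Y" and L: "mono L" and "0 \<le> \<delta>"
    and cover: "\<And>y. measure (distr M borel Y) {..<y} \<le> 1 - \<delta> \<Longrightarrow> L y \<le> \<mu>"
  shows "1 - \<delta> \<le> prob {\<omega> \<in> space M. L (Y \<omega>) \<le> \<mu>}"
proof -
  define P where "P = distr M borel Y"
  interpret P: prob_space P
    unfolding P_def using Y by (rule prob_space_distr)
  have sets_P: "sets P = sets borel" and space_P: "space P = UNIV"
    by (simp_all add: P_def)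
  define C where "C = (\<lambda>y. measure P {..<y}) -` {..1 - \<delta>}"
  have "measure P {y..} = 1 - measure P {..<y}" for y
  proof -
    have "{y..} = space P - {..<y}"
      by (auto simp: space_P)
    then show ?thesis
      using P.prob_compl[of "{..<y}"] by (simp add: sets_P)
  qed
  then have "UNIV - C = {y. measure P {y..} < \<delta>}"
    by (auto simp: C_def)
  then have complement: "measure P (UNIV - C) \<le> \<delta>"
    using measure_ccdf_less_le[OF P.finite_measure_axioms sets_P \<open>0 \<le> \<delta>\<close>] by simp
  have C: "C \<in> sets borel"
    unfolding C_def by (rule mono_vimage_atMost_borel[OF mono_measure_lessThan[OF P.finite_measure_axioms sets_P]])
  have "C \<subseteq> L -` {..\<mu>}"
    using cover by (auto simp: C_def P_def)
  from prob_ge_of_distr_complement_le[OF Y C this mono_vimage_atMost_borel[OF L] complement[unfolded P_def]]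
  show ?thesis
    by simp
qed

lemma (in prob_space) upper_confidence_bound:
  fixes Y :: "'a \<Rightarrow> real" and U :: "real \<Rightarrow> 'b::order"
  assumes Y: "random_variable borel Y" and U: "mono U" and "0 \<le> \<delta>"
    and cover: "\<And>y. \<delta> \<le> measure (distr M borel Y) {..y} \<Longrightarrow> \<mu> \<le> U y"
  shows "1 - \<delta> \<le> prob {\<omega> \<in> space M. \<mu> \<le> U (Y \<omega>)}"
proof -
  define P where "P = distr M borel Y"
  interpret P: prob_space P
    unfolding P_def using Y by (rule prob_space_distr)
  have sets_P: "sets P = sets borel"
    by (simp add: P_def)
  define C where "C = (\<lambda>y. measure P {..y}) -` {\<delta>..}"
  have "UNIV - C = {y. measure P {..y} < \<delta>}"
    by (auto simp: C_def)
  then have complement: "measure P (UNIV - C) \<le> \<delta>"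
    using measure_cdf_less_le[OF P.finite_measure_axioms sets_P \<open>0 \<le> \<delta>\<close>] by simp
  have C: "C \<in> sets borel"
    unfolding C_def by (rule mono_vimage_atLeast_borel[OF mono_measure_atMost[OF P.finite_measure_axioms sets_P]])
  have "C \<subseteq> U -` {\<mu>..}"
    using cover by (auto simp: C_def P_def)
  from prob_ge_of_distr_complement_le[OF Y C this mono_vimage_atLeast_borel[OF U] complement[unfolded P_def]]
  show ?thesis
    by simp
qed

section \<open>Exponential dispersion families\<close>

locale exponential_dispersion_family =
  fixes \<nu> :: "real measure" and \<kappa> :: "real \<Rightarrow> real" and \<Theta> :: "real set"
    and a :: "real \<Rightarrow> real \<Rightarrow> real" and v \<phi> :: real
  assumes sets_nu: "sets \<nu> = sets borel"
    and a_measurable: "(\<lambda>y. a y (v / \<phi>)) \<in> borel_measurable borel"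
    and v_pos: "v > 0" and phi_pos: "\<phi> > 0"
    and effective_domain:
      "\<Theta> = {t. (\<integral>\<^sup>+ y. ennreal (exp (y * t / (\<phi> / v) + a y (v / \<phi>))) \<partial>\<nu>) < \<infinity>}"
    and cumulant: "\<And>t. t \<in> \<Theta> \<Longrightarrow> (\<integral>\<^sup>+ y. ennreal (edf_density \<kappa> a v \<phi> t y) \<partial>\<nu>) = 1"
    and nondegenerate: "\<not> (\<exists>x. AE y in \<nu>. y = x)"
begin

definition \<rho> :: real where
  "\<rho> = v / \<phi>"

definition unnorm_density :: "real \<Rightarrow> real \<Rightarrow> real" where
  "unnorm_density t y = exp (\<rho> * t * y + a y \<rho>)"

definition partition :: "real \<Rightarrow> real" where
  "partition t = (\<integral>y. unnorm_density t y \<partial>\<nu>)"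

definition mean :: "real \<Rightarrow> real" where
  "mean t = (\<integral>y. y * edf_density \<kappa> a v \<phi> t y \<partial>\<nu>)"

lemma rho_pos: "0 < \<rho>"
  using v_pos phi_pos by (simp add: \<rho>_def)

lemma borel_measurable_a [measurable]: "(\<lambda>y. a y \<rho>) \<in> borel_measurable borel"
  using a_measurable by (simp add: \<rho>_def)

lemma borel_measurable_nu: "borel_measurable \<nu> = borel_measurable borel"
  by (rule measurable_cong_sets[OF sets_nu refl])

lemma borel_measurable_unnorm_density [measurable]: "unnorm_density t \<in> borel_measurable \<nu>"
  unfolding borel_measurable_nu unnorm_density_def by measurable

lemma edf_density_eq: "edf_density \<kappa> a v \<phi> t y = unnorm_density t y * exp (- \<rho> * \<kappa> t)"
  unfolding edf_density_def unnorm_density_def \<rho>_def exp_add[symmetric]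
  by (simp add: field_simps diff_divide_distrib)

lemma borel_measurable_edf_density [measurable]: "edf_density \<kappa> a v \<phi> t \<in> borel_measurable \<nu>"
  unfolding edf_density_eq by measurable

lemma unnorm_density_add: "unnorm_density (t + h) y = unnorm_density t y * exp (\<rho> * y * h)"
  unfolding unnorm_density_def exp_add[symmetric] by (simp add: algebra_simps)

lemma mem_Theta_iff: "t \<in> \<Theta> \<longleftrightarrow> (\<integral>\<^sup>+ y. ennreal (unnorm_density t y) \<partial>\<nu>) < \<infinity>"
  unfolding effective_domain unnorm_density_def \<rho>_def by (simp add: field_simps)

lemma integrable_unnorm_density: "t \<in> \<Theta> \<Longrightarrow> integrable \<nu> (unnorm_density t)"
proof (rule integrableI_nonneg)
  show "AE y in \<nu>. 0 \<le> unnorm_density t y"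
    by (simp add: unnorm_density_def)
qed (use mem_Theta_iff borel_measurable_unnorm_density in blast)+

lemma edf_density_pos: "0 < edf_density \<kappa> a v \<phi> t y"
  by (simp add: edf_density_def)

lemma integral_edf_density: "t \<in> \<Theta> \<Longrightarrow> (\<integral>y. edf_density \<kappa> a v \<phi> t y \<partial>\<nu>) = 1"
proof -
  assume t: "t \<in> \<Theta>"
  have "(\<integral>y. edf_density \<kappa> a v \<phi> t y \<partial>\<nu>) = enn2real (\<integral>\<^sup>+ y. ennreal (edf_density \<kappa> a v \<phi> t y) \<partial>\<nu>)"
    using borel_measurable_edf_density less_imp_le[OF edf_density_pos] by (intro integral_eq_nn_integral AE_I2)
  then show ?thesis
    by (simp add: cumulant[OF t])
qed

lemma partition_eq: "t \<in> \<Theta> \<Longrightarrow> partition t = exp (\<rho> * \<kappa> t)"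
proof -
  assume t: "t \<in> \<Theta>"
  have "partition t * exp (- \<rho> * \<kappa> t) = 1"
    using integral_edf_density[OF t] unfolding partition_def edf_density_eq by simp
  then show ?thesis
    by (simp add: exp_minus field_simps)
qed

lemma edf_density_eq_partition:
  "t \<in> \<Theta> \<Longrightarrow> edf_density \<kappa> a v \<phi> t y = unnorm_density t y / partition t"
  unfolding edf_density_eq by (simp add: partition_eq exp_minus divide_inverse)

lemma integrable_edf_density:
  assumes "t \<in> \<Theta>"
  shows "integrable \<nu> (edf_density \<kappa> a v \<phi> t)"
proof -
  have "edf_density \<kappa> a v \<phi> t = (\<lambda>y. unnorm_density t y / partition t)"
    by (simp add: fun_eq_iff edf_density_eq_partition assms)
  then show ?thesis
    using integrable_unnorm_density[OF assms] by simp
qed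

lemma mean_eq: "t \<in> \<Theta> \<Longrightarrow> mean t = (\<integral>y. y * unnorm_density t y \<partial>\<nu>) / partition t"
  by (simp add: mean_def edf_density_eq_partition)

lemma kappa_eq_ln_partition: "t \<in> \<Theta> \<Longrightarrow> \<kappa> t = ln (partition t) / \<rho>"
  using rho_pos by (simp add: partition_eq)

lemma unnorm_density_has_derivative:
  "((\<lambda>s. unnorm_density s y) has_real_derivative \<rho> * (y * unnorm_density t y)) (at t)"
  unfolding unnorm_density_def by (auto intro!: derivative_eq_intros simp: algebra_simps)

lemma abs_unnorm_density_quotient_le:
  assumes "0 < e" "h \<noteq> 0" "2 * \<bar>h\<bar> \<le> e"
  shows "\<bar>(unnorm_density (t + h) y - unnorm_density t y) / h\<bar>
    \<le> 2 * (unnorm_density (t + e) y + unnorm_density (t - e) y) / e"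
proof -
  have quotient: "(unnorm_density (t + h) y - unnorm_density t y) / h
      = unnorm_density t y * ((exp (\<rho> * y * h) - 1) / h)"
    unfolding unnorm_density_add using assms by (simp add: field_simps)
  have "\<bar>(unnorm_density (t + h) y - unnorm_density t y) / h\<bar>
      = unnorm_density t y * \<bar>(exp (\<rho> * y * h) - 1) / h\<bar>"
    unfolding quotient abs_mult by (simp add: unnorm_density_def)
  also have "\<dots> \<le> unnorm_density t y * (2 * (exp (\<rho> * y * e) + exp (- (\<rho> * y * e))) / e)"
    using assms by (intro mult_left_mono abs_exp_diff_quotient_le) (simp_all add: unnorm_density_def)
  also have "\<dots> = 2 * (unnorm_density (t + e) y + unnorm_density (t - e) y) / e"
    using unnorm_density_add[of t e y] unnorm_density_add[of t "- e" y] by (simp add: field_simps)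
  finally show ?thesis .
qed

lemma
  assumes t: "t \<in> interior \<Theta>"
  shows integrable_y_unnorm_density: "integrable \<nu> (\<lambda>y. y * unnorm_density t y)"
    and partition_has_derivative:
      "(partition has_real_derivative \<rho> * (\<integral>y. y * unnorm_density t y \<partial>\<nu>)) (at t)"
proof -
  obtain e where e: "0 < e" "cball t e \<subseteq> interior \<Theta>"
    using open_contains_cball[THEN iffD1, OF open_interior] t by blast
  have near: "s \<in> \<Theta>" if "\<bar>s - t\<bar> \<le> e" for s
  proof -
    have "s \<in> cball t e"
      using that by (simp add: dist_real_def abs_minus_commute)
    then show ?thesis
      using e(2) interior_subset by blast
  qed
  have half_e: "0 < e / 2"
    using e by simp
  have f_int: "integrable \<nu> (unnorm_density s)" if "\<bar>s - t\<bar> \<le> e / 2" for s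
    using that e by (intro integrable_unnorm_density near) simp
  have f'_meas: "(\<lambda>y. \<rho> * (y * unnorm_density t y)) \<in> borel_measurable \<nu>"
    unfolding borel_measurable_nu unnorm_density_def by measurable
  have w_int: "integrable \<nu> (\<lambda>y. 2 * (unnorm_density (t + e) y + unnorm_density (t - e) y) / e)"
    using e by (intro integrable_divide_zero integrable_mult_right Bochner_Integration.integrable_add
        integrable_unnorm_density near) simp_all
  have bound: "\<bar>(unnorm_density (t + h) y - unnorm_density t y) / h\<bar>
      \<le> 2 * (unnorm_density (t + e) y + unnorm_density (t - e) y) / e"
    if "h \<noteq> 0" "\<bar>h\<bar> \<le> e / 2" for h y
    using that e by (intro abs_unnorm_density_quotient_le) simp_all
  note dominated = half_e f_int f'_meas unnorm_density_has_derivative w_int bound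
  have "integrable \<nu> (\<lambda>y. \<rho> * (y * unnorm_density t y))"
    by (rule integrable_derivative_dominated[OF dominated])
  then show "integrable \<nu> (\<lambda>y. y * unnorm_density t y)"
    using rho_pos by simp
  have "(partition has_real_derivative (\<integral>y. \<rho> * (y * unnorm_density t y) \<partial>\<nu>)) (at t)"
    unfolding partition_def by (rule has_real_derivative_integral[OF dominated])
  then show "(partition has_real_derivative \<rho> * (\<integral>y. y * unnorm_density t y \<partial>\<nu>)) (at t)"
    by simp
qed

lemma kappa_has_derivative:
  assumes t: "t \<in> interior \<Theta>"
  shows "(\<kappa> has_real_derivative mean t) (at t)"
proof -
  have t_in: "t \<in> \<Theta>"
    using t interior_subset by blast
  have pos: "0 < partition t"
    by (simp add: partition_eq[OF t_in])
  have "((\<lambda>s. ln (partition s) / \<rho>) has_real_derivative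
      (inverse (partition t) * (\<rho> * (\<integral>y. y * unnorm_density t y \<partial>\<nu>))) / \<rho>) (at t)"
    by (rule DERIV_cdivide[OF DERIV_chain2[OF DERIV_ln[OF pos] partition_has_derivative[OF t]]])
  also have "(inverse (partition t) * (\<rho> * (\<integral>y. y * unnorm_density t y \<partial>\<nu>))) / \<rho> = mean t"
    using rho_pos pos by (simp add: mean_eq[OF t_in] field_simps)
  finally show ?thesis
  proof (rule has_field_derivative_transform_within_open[where S = "interior \<Theta>"])
    fix s assume "s \<in> interior \<Theta>"
    then have "s \<in> \<Theta>"
      using interior_subset by blast
    then show "ln (partition s) / \<rho> = \<kappa> s"
      by (simp add: kappa_eq_ln_partition)
  qed (use t in simp_all)
qed

lemma integrable_y_edf_density:
  assumes "t \<in> interior \<Theta>"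
  shows "integrable \<nu> (\<lambda>y. y * edf_density \<kappa> a v \<phi> t y)"
proof -
  have "t \<in> \<Theta>"
    using assms interior_subset by blast
  then show ?thesis
    using integrable_y_unnorm_density[OF assms] by (simp add: edf_density_eq_partition)
qed

definition likelihood_ratio :: "real \<Rightarrow> real \<Rightarrow> real \<Rightarrow> real" where
  "likelihood_ratio t t' y = exp (\<rho> * (t' - t) * y - \<rho> * (\<kappa> t' - \<kappa> t))"

lemma edf_density_likelihood_ratio:
  "edf_density \<kappa> a v \<phi> t' y = edf_density \<kappa> a v \<phi> t y * likelihood_ratio t t' y"
  unfolding edf_density_eq unnorm_density_def likelihood_ratio_def mult.assoc exp_add[symmetric]
  by (simp add: algebra_simps)

lemma likelihood_ratio_less: "t < t' \<Longrightarrow> x < y \<Longrightarrow> likelihood_ratio t t' x < likelihood_ratio t t' y"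
  using mult_strict_left_mono[of x y "\<rho> * (t' - t)"] rho_pos by (simp add: likelihood_ratio_def)

lemma mean_diff_eq_covariance:
  assumes t: "t \<in> interior \<Theta>" and t': "t' \<in> interior \<Theta>"
  defines "g \<equiv> \<lambda>y. edf_density \<kappa> a v \<phi> t y
    * ((y - mean t) * (likelihood_ratio t t' y - likelihood_ratio t t' (mean t)))"
  shows "integrable \<nu> g" and "(\<integral>y. g y \<partial>\<nu>) = mean t' - mean t"
proof -
  have t_in: "t \<in> \<Theta>" and t'_in: "t' \<in> \<Theta>"
    using t t' interior_subset by blast+
  have g_eq: "g = (\<lambda>y. y * edf_density \<kappa> a v \<phi> t' y - mean t * edf_density \<kappa> a v \<phi> t' y
      - likelihood_ratio t t' (mean t) * (y * edf_density \<kappa> a v \<phi> t y)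
      + likelihood_ratio t t' (mean t) * mean t * edf_density \<kappa> a v \<phi> t y)"
    by (simp add: fun_eq_iff g_def edf_density_likelihood_ratio[of t' _ t] algebra_simps)
  note integrable = integrable_edf_density[OF t_in] integrable_edf_density[OF t'_in]
    integrable_y_edf_density[OF t] integrable_y_edf_density[OF t']
  show "integrable \<nu> g"
    unfolding g_eq using integrable by simp
  show "(\<integral>y. g y \<partial>\<nu>) = mean t' - mean t"
    unfolding g_eq using integrable by (simp add: integral_edf_density t_in t'_in flip: mean_def)
qed

lemma mean_less:
  assumes t: "t \<in> interior \<Theta>" and t': "t' \<in> interior \<Theta>" and "t < t'"
  shows "mean t < mean t'"
proof -
  define m where "m = mean t"
  define g where "g = (\<lambda>y. edf_density \<kappa> a v \<phi> t y
    * ((y - m) * (likelihood_ratio t t' y - likelihood_ratio t t' m)))"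
  note covariance = mean_diff_eq_covariance[OF t t', folded m_def, folded g_def]
  have "0 < (y - m) * (likelihood_ratio t t' y - likelihood_ratio t t' m)" if "y \<noteq> m" for y
    using that likelihood_ratio_less[OF \<open>t < t'\<close>, of y m] likelihood_ratio_less[OF \<open>t < t'\<close>, of m y]
    by (cases y m rule: linorder_cases) (auto intro: mult_pos_pos mult_neg_neg)
  then have g_pos: "0 < g y" if "y \<noteq> m" for y
    using that edf_density_pos[of t y] by (simp add: g_def)
  have g_m: "g m = 0"
    by (simp add: g_def)
  have g_zero_iff: "g y = 0 \<longleftrightarrow> y = m" for y
    using g_pos[of y] g_m by (cases "y = m") auto
  have g_nonneg: "0 \<le> g y" for y
    using g_pos[of y] g_m by (cases "y = m") auto
  have "\<not> (AE y in \<nu>. g y = 0)"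
    using nondegenerate unfolding g_zero_iff by blast
  then have "integral\<^sup>L \<nu> g \<noteq> 0"
    using integral_nonneg_eq_0_iff_AE[OF covariance(1)] g_nonneg by simp
  moreover have "0 \<le> integral\<^sup>L \<nu> g"
    using g_nonneg by (intro integral_nonneg_AE AE_I2)
  ultimately show ?thesis
    using covariance(2) by (simp add: m_def)
qed

lemma deriv_kappa: "t \<in> interior \<Theta> \<Longrightarrow> deriv \<kappa> t = mean t"
  by (rule DERIV_imp_deriv[OF kappa_has_derivative])

lemma inj_on_deriv_kappa: "inj_on (deriv \<kappa>) (interior \<Theta>)"
proof -
  have "strict_mono_on (interior \<Theta>) mean"
    by (rule strict_mono_onI) (rule mean_less)
  then have "inj_on mean (interior \<Theta>)"
    by (rule strict_mono_on_imp_inj_on)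
  then show ?thesis
    by (rule inj_on_cong[THEN iffD2, rotated]) (simp add: deriv_kappa)
qed

lemma canon_link_deriv: "t \<in> interior \<Theta> \<Longrightarrow> canon_link \<kappa> \<Theta> (deriv \<kappa> t) = t"
  unfolding canon_link_def by (rule the_inv_into_f_f[OF inj_on_deriv_kappa])

lemma sets_edf_measure: "sets (edf_measure \<nu> \<kappa> a v \<phi> t) = sets borel"
  by (simp add: edf_measure_def sets_nu)

lemma prob_space_edf_measure: "t \<in> \<Theta> \<Longrightarrow> prob_space (edf_measure \<nu> \<kappa> a v \<phi> t)"
proof (rule prob_spaceI)
  assume "t \<in> \<Theta>"
  have space: "space \<nu> = UNIV"
    using sets_eq_imp_space_eq[OF sets_nu] by simp
  have "UNIV \<in> sets \<nu>"
    by (simp add: sets_nu)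
  then show "emeasure (edf_measure \<nu> \<kappa> a v \<phi> t) (space (edf_measure \<nu> \<kappa> a v \<phi> t)) = 1"
    by (simp add: edf_measure_def space emeasure_density cumulant \<open>t \<in> \<Theta>\<close>)
qed

lemma expectation_edf_measure:
  assumes "t \<in> interior \<Theta>"
  shows "(\<integral>y. y \<partial>edf_measure \<nu> \<kappa> a v \<phi> t) = deriv \<kappa> t"
proof -
  have "(\<integral>y. y \<partial>edf_measure \<nu> \<kappa> a v \<phi> t) = mean t"
    unfolding edf_measure_def mean_def
  proof (subst integral_density)
    show "(\<lambda>y. y) \<in> borel_measurable \<nu>"
      by (simp add: borel_measurable_nu)
  qed (simp_all add: less_imp_le[OF edf_density_pos] mult.commute)
  then show ?thesis
    by (simp add: deriv_kappa assms)
qed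

lemma mono_edf_cdfs:
  assumes "\<mu> \<in> deriv \<kappa> ` interior \<Theta>"
  shows "mono (edf_cdf \<nu> \<kappa> \<Theta> a v \<phi> \<mu>)" and "mono (edf_cdf_strict \<nu> \<kappa> \<Theta> a v \<phi> \<mu>)"
proof -
  obtain t where t: "t \<in> interior \<Theta>" and \<mu>: "\<mu> = deriv \<kappa> t"
    using assms by blast
  have "t \<in> \<Theta>"
    using t interior_subset by blast
  then interpret prob_space "edf_measure \<nu> \<kappa> a v \<phi> t"
    by (rule prob_space_edf_measure)
  have "edf_cdf \<nu> \<kappa> \<Theta> a v \<phi> \<mu> = (\<lambda>y. measure (edf_measure \<nu> \<kappa> a v \<phi> t) {..y})"
    and "edf_cdf_strict \<nu> \<kappa> \<Theta> a v \<phi> \<mu> = (\<lambda>y. measure (edf_measure \<nu> \<kappa> a v \<phi> t) {..<y})"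
    by (simp_all add: fun_eq_iff edf_cdf_def edf_cdf_strict_def \<mu> canon_link_deriv t)
  then show "mono (edf_cdf \<nu> \<kappa> \<Theta> a v \<phi> \<mu>)" and "mono (edf_cdf_strict \<nu> \<kappa> \<Theta> a v \<phi> \<mu>)"
    using mono_measure_atMost[OF finite_measure_axioms sets_edf_measure]
      mono_measure_lessThan[OF finite_measure_axioms sets_edf_measure]
    by simp_all
qed

lemma mono_lower_bd: "mono (lower_bd \<nu> \<kappa> \<Theta> a v \<phi> \<delta>)"
proof (rule monoI)
  fix x y :: real assume "x \<le> y"
  have le: "edf_cdf_strict \<nu> \<kappa> \<Theta> a v \<phi> \<mu> x \<le> edf_cdf_strict \<nu> \<kappa> \<Theta> a v \<phi> \<mu> y"
    if "\<mu> \<in> deriv \<kappa> ` interior \<Theta>" for \<mu>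
    by (rule monoD[OF mono_edf_cdfs(2)[OF that] \<open>x \<le> y\<close>])
  show "lower_bd \<nu> \<kappa> \<Theta> a v \<phi> \<delta> x \<le> lower_bd \<nu> \<kappa> \<Theta> a v \<phi> \<delta> y"
    unfolding lower_bd_def by (intro Inf_superset_mono image_mono) (auto intro: order.trans[OF le])
qed

lemma mono_upper_bd: "mono (upper_bd \<nu> \<kappa> \<Theta> a v \<phi> \<delta>)"
proof (rule monoI)
  fix x y :: real assume "x \<le> y"
  have le: "edf_cdf \<nu> \<kappa> \<Theta> a v \<phi> \<mu> x \<le> edf_cdf \<nu> \<kappa> \<Theta> a v \<phi> \<mu> y"
    if "\<mu> \<in> deriv \<kappa> ` interior \<Theta>" for \<mu>
    by (rule monoD[OF mono_edf_cdfs(1)[OF that] \<open>x \<le> y\<close>])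
  show "upper_bd \<nu> \<kappa> \<Theta> a v \<phi> \<delta> x \<le> upper_bd \<nu> \<kappa> \<Theta> a v \<phi> \<delta> y"
    unfolding upper_bd_def by (intro Sup_subset_mono image_mono) (auto intro: order.trans[OF _ le])
qed

end


lemma lower_bd_le:
  assumes "\<mu> \<in> deriv \<kappa> ` interior \<Theta>" and "edf_cdf_strict \<nu> \<kappa> \<Theta> a v \<phi> \<mu> y \<le> 1 - \<delta>"
  shows "lower_bd \<nu> \<kappa> \<Theta> a v \<phi> \<delta> y \<le> ereal \<mu>"
  unfolding lower_bd_def using assms by (intro Inf_lower) blast

lemma upper_bd_ge:
  assumes "\<mu> \<in> deriv \<kappa> ` interior \<Theta>" and "\<delta> \<le> edf_cdf \<nu> \<kappa> \<Theta> a v \<phi> \<mu> y"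
  shows "ereal \<mu> \<le> upper_bd \<nu> \<kappa> \<Theta> a v \<phi> \<delta> y"
  unfolding upper_bd_def using assms by (intro Sup_upper) blast

theorem proposition3p5:
  fixes \<nu> :: "real measure" and \<kappa> :: "real \<Rightarrow> real" and \<Theta> :: "real set"
    and a :: "real \<Rightarrow> real \<Rightarrow> real" and v \<phi> \<theta> \<delta> :: real
    and M :: "'w measure" and Y :: "'w \<Rightarrow> real"
  assumes nu_sf: "sigma_finite_measure \<nu>"
    and nu_sets: "sets \<nu> = sets borel"
    and a_meas: "(\<lambda>y. a y (v / \<phi>)) \<in> borel_measurable borel"
    and v_pos: "v > 0" and phi_pos: "\<phi> > 0"
    \<comment> \<open>\<Theta> is the effective domain, and \<kappa> is the cumulant function on it\<close>
    and eff_dom: "\<Theta> = {t. (\<integral>\<^sup>+ y. ennreal (exp (y * t / (\<phi> / v) + a y (v / \<phi>))) \<partial>\<nu>) < \<infinity>}"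
    and cumulant: "\<And>t. t \<in> \<Theta> \<Longrightarrow> (\<integral>\<^sup>+ y. ennreal (edf_density \<kappa> a v \<phi> t y) \<partial>\<nu>) = 1"
    \<comment> \<open>Assumption (A1)\<close>
    and A1_int: "interior \<Theta> \<noteq> {}"
    and A1_nu: "\<not> (\<exists>x. AE y in \<nu>. y = x)"
    and theta: "\<theta> \<in> interior \<Theta>"
    and delta: "0 < \<delta>" "\<delta> < 1"
    and M: "prob_space M"
    and Y_meas: "Y \<in> borel_measurable M"
    and Y_law: "distr M borel Y = edf_measure \<nu> \<kappa> a v \<phi> \<theta>"
  shows "measure M {\<omega> \<in> space M. ereal (prob_space.expectation M Y) \<ge> lower_bd \<nu> \<kappa> \<Theta> a v \<phi> \<delta> (Y \<omega>)} \<ge> 1 - \<delta>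
       \<and> measure M {\<omega> \<in> space M. ereal (prob_space.expectation M Y) \<le> upper_bd \<nu> \<kappa> \<Theta> a v \<phi> \<delta> (Y \<omega>)} \<ge> 1 - \<delta>"
proof -
  interpret exponential_dispersion_family \<nu> \<kappa> \<Theta> a v \<phi>
    using nu_sets a_meas v_pos phi_pos eff_dom cumulant A1_nu by unfold_locales
  interpret M: prob_space M
    by (rule M)
  define \<mu> where "\<mu> = deriv \<kappa> \<theta>"
  have \<mu>_in: "\<mu> \<in> deriv \<kappa> ` interior \<Theta>"
    unfolding \<mu>_def using theta by blast
  have law: "distr M borel Y = edf_measure \<nu> \<kappa> a v \<phi> (canon_link \<kappa> \<Theta> \<mu>)"
    unfolding Y_law \<mu>_def canon_link_deriv[OF theta] ..
  have mean: "M.expectation Y = \<mu>"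
    using integral_distr[OF Y_meas, of "\<lambda>y. y", symmetric]
    by (simp add: Y_law expectation_edf_measure[OF theta] \<mu>_def)
  have "1 - \<delta> \<le> M.prob {\<omega> \<in> space M. lower_bd \<nu> \<kappa> \<Theta> a v \<phi> \<delta> (Y \<omega>) \<le> ereal \<mu>}"
    using delta by (intro M.lower_confidence_bound[OF Y_meas mono_lower_bd] lower_bd_le[OF \<mu>_in])
      (simp_all add: law edf_cdf_strict_def)
  moreover have "1 - \<delta> \<le> M.prob {\<omega> \<in> space M. ereal \<mu> \<le> upper_bd \<nu> \<kappa> \<Theta> a v \<phi> \<delta> (Y \<omega>)}"
    using delta by (intro M.upper_confidence_bound[OF Y_meas mono_upper_bd] upper_bd_ge[OF \<mu>_in])
      (simp_all add: law edf_cdf_def)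
  ultimately show ?thesis
    by (simp add: mean)
qed

end
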